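(* For any probability measure $G$ on $[0,\infty)$ there exists $\theta>0$ such that for all $x_1,x_2,y_1,y_2\in\mathbb Z$, with $T=T((x_1,y_1),(x_2,y_2))$, we have $\mathbb E[e^{\theta T}]<\infty$.
   Context: Model: In $\mathbb Z^2$, every vertical edge receives the deterministic weight $1$ and every horizontal edge (joining $(x,y)$ and $(x+1,y)$) receives a random weight, independently with law $G$. The passage time of a nearest-neighbour path is the sum of the weights of its edges, and $T(u,w)$ is the infimum of passage times over paths from $u$ to $w$. *)

theory Defs
  imports "HOL-Probability.Probability"
begin

type_synonym site = "int \<times> int"

text \<open>Environment: the weight of the horizontal edge joining (x,y) and (x+1,y)
  is \<open>\<omega> (x,y)\<close>; vertical edges have weight 1.\<close>

definition nn_adj :: "site \<Rightarrow> site \<Rightarrow> bool" where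
  "nn_adj p q \<longleftrightarrow> \<bar>fst p - fst q\<bar> + \<bar>snd p - snd q\<bar> = 1"

definition edge_weight :: "(site \<Rightarrow> real) \<Rightarrow> site \<Rightarrow> site \<Rightarrow> real" where
  "edge_weight \<omega> p q = (if snd p = snd q then \<omega> (min (fst p) (fst q), snd p) else 1)"

definition is_path :: "site \<Rightarrow> site \<Rightarrow> site list \<Rightarrow> bool" where
  "is_path u w ps \<longleftrightarrow> ps \<noteq> [] \<and> hd ps = u \<and> last ps = w \<and>
     (\<forall>i < length ps - 1. nn_adj (ps ! i) (ps ! Suc i))"

definition passage_time :: "(site \<Rightarrow> real) \<Rightarrow> site list \<Rightarrow> real" where
  "passage_time \<omega> ps = (\<Sum>i < length ps - 1. edge_weight \<omega> (ps ! i) (ps ! Suc i))"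

definition fpp_T :: "(site \<Rightarrow> real) \<Rightarrow> site \<Rightarrow> site \<Rightarrow> real" where
  "fpp_T \<omega> u w = Inf {passage_time \<omega> ps | ps. is_path u w ps}"

definition env_measure :: "real measure \<Rightarrow> (site \<Rightarrow> real) measure" where
  "env_measure G = PiM UNIV (\<lambda>_. G)"

end

theory Submission
  imports Defs
begin

(* Walk vertically from (x1, y1) to height y2, then cross every column x between x1 and x2
   by a detour: climb k_x steps to the first height where the horizontal edge weight is at
   most a, cross there and climb back down.  Hence T <= |y1 - y2| + |x1 - x2| a + 2 sum k_x,
   and with theta = ln 2 / 2 the variable exp (theta T) is at most a constant times the
   product of the 2^k_x.  These depend on disjoint columns, so they are independent, and
   P (k_x >= k) = G (a, oo)^k <= 4^-k once a is chosen with G (a, oo) <= 1/4, so that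
   E 2^k_x <= 2. *)

lemma nn_adj_commute: "nn_adj p q \<longleftrightarrow> nn_adj q p"
  by (auto simp: nn_adj_def abs_minus_commute)

lemma edge_weight_commute: "edge_weight \<omega> p q = edge_weight \<omega> q p"
  by (simp add: edge_weight_def min.commute)

lemma passage_time_nonneg:
  assumes "\<And>s. 0 \<le> \<omega> s"
  shows "0 \<le> passage_time \<omega> ps"
  unfolding passage_time_def edge_weight_def using assms by (intro sum_nonneg) auto

inductive walk :: "(site \<Rightarrow> real) \<Rightarrow> site \<Rightarrow> site \<Rightarrow> real \<Rightarrow> bool" for \<omega> where
  walk_refl: "walk \<omega> u u 0"
| walk_step: "nn_adj u v \<Longrightarrow> walk \<omega> v w c \<Longrightarrow> walk \<omega> u w (edge_weight \<omega> u v + c)"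

lemma walk_edge: "nn_adj u v \<Longrightarrow> walk \<omega> u v (edge_weight \<omega> u v)"
  using walk_step[OF _ walk_refl] by fastforce

lemma walk_trans: "walk \<omega> u v c \<Longrightarrow> walk \<omega> v w d \<Longrightarrow> walk \<omega> u w (c + d)"
proof (induction rule: walk.induct)
  case (walk_step u v' w' c)
  then show ?case using walk.walk_step[of u v' \<omega> w "c + d"] by (simp add: add.assoc)
qed simp

lemma walk_sym: "walk \<omega> u w c \<Longrightarrow> walk \<omega> w u c"
proof (induction rule: walk.induct)
  case (walk_step u v w c)
  have "walk \<omega> w u (c + edge_weight \<omega> v u)"
    using walk_step.IH walk_edge[of v u \<omega>] walk_step.hyps(1) nn_adj_commute by (metis walk_trans)
  then show ?case by (simp add: edge_weight_commute add.commute)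
qed (rule walk_refl)

lemma walk_imp_path: "walk \<omega> u w c \<Longrightarrow> \<exists>ps. is_path u w ps \<and> passage_time \<omega> ps = c"
proof (induction rule: walk.induct)
  case (walk_refl u)
  show ?case by (rule exI[of _ "[u]"]) (simp add: is_path_def passage_time_def)
next
  case (walk_step u v w c)
  then obtain ps where ps: "is_path v w ps" "passage_time \<omega> ps = c" by blast
  then obtain n where n: "length ps = Suc n" by (cases ps) (auto simp: is_path_def)
  have "is_path u w (u # ps)"
    using ps(1) walk_step.hyps(1) n by (auto simp: is_path_def less_Suc_eq_0_disj hd_conv_nth)
  moreover have "passage_time \<omega> (u # ps) = edge_weight \<omega> u v + c"
    using ps n by (auto simp: passage_time_def is_path_def sum.lessThan_Suc_shift hd_conv_nth
        simp del: sum.lessThan_Suc)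
  ultimately show ?case by blast
qed

lemma fpp_T_le_walk:
  assumes "\<And>s. 0 \<le> \<omega> s" and "walk \<omega> u w c"
  shows "fpp_T \<omega> u w \<le> c"
proof -
  obtain ps where "is_path u w ps" "passage_time \<omega> ps = c"
    using walk_imp_path[OF assms(2)] by blast
  moreover have "bdd_below {passage_time \<omega> ps | ps. is_path u w ps}"
    using passage_time_nonneg[OF assms(1)] by (auto intro: bdd_belowI[of _ 0])
  ultimately show ?thesis
    unfolding fpp_T_def by (metis (mono_tags, lifting) cInf_lower mem_Collect_eq)
qed

lemma walk_up: "walk \<omega> (x, y) (x, y + int k) (real k)"
proof (induction k)
  case (Suc k)
  have "walk \<omega> (x, y + int k) (x, y + int k + 1) 1"
    using walk_edge[of "(x, y + int k)" "(x, y + int k + 1)" \<omega>]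
    by (simp add: nn_adj_def edge_weight_def)
  with Suc have "walk \<omega> (x, y) (x, y + int k + 1) (real k + 1)" by (rule walk_trans)
  then show ?case by (simp add: ac_simps)
qed (simp add: walk_refl)

lemma walk_vertical: "walk \<omega> (x, y) (x, y') \<bar>y - y'\<bar>"
proof (cases "y \<le> y'")
  case True
  then show ?thesis using walk_up[of \<omega> x y "nat (y' - y)"] by simp
next
  case False
  then show ?thesis using walk_sym[OF walk_up[of \<omega> x y' "nat (y - y')"]] by simp
qed

lemma walk_detour: "walk \<omega> (x, y) (x + 1, y) (2 * real k + \<omega> (x, y + int k))"
proof -
  have cross: "walk \<omega> (x, y + int k) (x + 1, y + int k) (\<omega> (x, y + int k))"
    using walk_edge[of "(x, y + int k)" "(x + 1, y + int k)" \<omega>]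
    by (simp add: nn_adj_def edge_weight_def)
  have "walk \<omega> (x, y) (x + 1, y) (real k + \<omega> (x, y + int k) + real k)"
    by (rule walk_trans[OF walk_trans[OF walk_up cross] walk_sym[OF walk_up]])
  then show ?thesis by (simp add: algebra_simps)
qed

lemma walk_row_right:
  "walk \<omega> (x, y) (x + int n, y) (\<Sum>i\<in>{x..<x + int n}. 2 * real (k i) + \<omega> (i, y + int (k i)))"
proof (induction n)
  case (Suc n)
  let ?d = "\<lambda>i. 2 * real (k i) + \<omega> (i, y + int (k i))"
  have "walk \<omega> (x, y) (x + int n + 1, y) ((\<Sum>i\<in>{x..<x + int n}. ?d i) + ?d (x + int n))"
    using Suc walk_detour by (rule walk_trans)
  moreover have "{x..<x + int (Suc n)} = insert (x + int n) {x..<x + int n}" by auto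
  ultimately show ?case by (simp add: add.commute add.left_commute)
qed (simp add: walk_refl)

lemma walk_row:
  "walk \<omega> (x1, y) (x2, y)
     (\<Sum>i\<in>{min x1 x2..<max x1 x2}. 2 * real (k i) + \<omega> (i, y + int (k i)))"
proof (cases "x1 \<le> x2")
  case True
  then show ?thesis using walk_row_right[of \<omega> x1 y "nat (x2 - x1)" k] by simp
next
  case False
  then show ?thesis using walk_sym[OF walk_row_right[of \<omega> x2 y "nat (x1 - x2)" k]] by simp
qed

lemma fpp_T_le_detours:
  assumes "\<And>s. 0 \<le> \<omega> s"
  shows "fpp_T \<omega> (x1, y1) (x2, y2) \<le>
    of_int \<bar>y1 - y2\<bar> + (\<Sum>i\<in>{min x1 x2..<max x1 x2}. 2 * real (k i) + \<omega> (i, y2 + int (k i)))"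
  using assms by (rule fpp_T_le_walk) (rule walk_trans[OF walk_vertical walk_row])

lemma product_prob_space_const:
  assumes "prob_space G"
  shows "product_prob_space (\<lambda>_. G)"
proof -
  interpret G: prob_space G by fact
  show ?thesis
    by (simp add: product_prob_space_def product_prob_space_axioms_def product_sigma_finite_def
        G.sigma_finite_measure_axioms assms)
qed

lemma (in product_prob_space) AE_all_components:
  assumes "countable I" and "\<And>i. i \<in> I \<Longrightarrow> AE x in M i. P x"
  shows "AE \<omega> in Pi\<^sub>M I M. \<forall>i\<in>I. P (\<omega> i)"
  using assms by (simp add: AE_ball_countable AE_component)

lemma (in product_prob_space) indep_vars_components: "P.indep_vars M (\<lambda>i \<omega>. \<omega> i) I"
proof (cases "I = {}")
  case True
  then show ?thesis unfolding P.indep_vars_def P.indep_sets_def by auto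
next
  case False
  have "distr (Pi\<^sub>M I M) (Pi\<^sub>M I M) (\<lambda>\<omega>. restrict \<omega> I) = Pi\<^sub>M I (\<lambda>i. distr (Pi\<^sub>M I M) (M i) (\<lambda>\<omega>. \<omega> i))"
  proof -
    have "distr (Pi\<^sub>M I M) (Pi\<^sub>M I M) (\<lambda>\<omega>. restrict \<omega> I) = distr (Pi\<^sub>M I M) (Pi\<^sub>M I M) (\<lambda>\<omega>. \<omega>)"
      by (rule distr_cong) (auto simp: space_PiM)
    also have "\<dots> = Pi\<^sub>M I (\<lambda>i. distr (Pi\<^sub>M I M) (M i) (\<lambda>\<omega>. \<omega> i))"
      by (simp add: distr_id distr_PiM_component M.prob_space_axioms cong: PiM_cong)
    finally show ?thesis .
  qed
  with False show ?thesis by (subst P.indep_vars_iff_distr_eq_PiM') auto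
qed

lemma (in product_prob_space) nn_integral_prod_blocks:
  assumes "finite L" and "disjoint_family_on K L" and "\<And>j. j \<in> L \<Longrightarrow> K j \<subseteq> I"
    and "\<And>j. j \<in> L \<Longrightarrow> f j \<in> borel_measurable (Pi\<^sub>M (K j) M)"
  shows "(\<integral>\<^sup>+\<omega>. (\<Prod>j\<in>L. f j (restrict \<omega> (K j))) \<partial>Pi\<^sub>M I M) =
    (\<Prod>j\<in>L. \<integral>\<^sup>+\<omega>. f j (restrict \<omega> (K j)) \<partial>Pi\<^sub>M I M)"
proof (rule P.indep_vars_nn_integral)
  have "P.indep_vars (\<lambda>j. Pi\<^sub>M (K j) M) (\<lambda>j \<omega>. restrict \<omega> (K j)) L"
    using P.indep_vars_restrict[OF indep_vars_components assms(3,2)] by simp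
  then show "P.indep_vars (\<lambda>_. borel) (\<lambda>j \<omega>. f j (restrict \<omega> (K j))) L"
    by (rule P.indep_vars_compose2) (rule assms(4))
qed (use assms(1) in auto)

lemma (in real_distribution) tendsto_measure_greaterThan_at_top:
  "((\<lambda>a. measure M {a<..}) \<longlongrightarrow> 0) at_top"
proof -
  have "measure M {a<..} = 1 - cdf M a" for a
    using prob_compl[of "{..a}"] by (simp add: cdf_def Compl_eq_Diff_UNIV[symmetric])
  moreover have "((\<lambda>a. 1 - cdf M a) \<longlongrightarrow> 1 - 1) at_top"
    by (intro tendsto_diff tendsto_const cdf_lim_at_top_prob)
  ultimately show ?thesis by simp
qed

(* A measurable substitute for 2^k_x, with k_x the least k such that the horizontal edge of
   column x at height y + k weighs at most a; it is infinite when there is no such k. *)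
definition detour_weight :: "real \<Rightarrow> int \<Rightarrow> int \<Rightarrow> (site \<Rightarrow> real) \<Rightarrow> ennreal" where
  "detour_weight a y x \<omega> = (\<Sum>k. ennreal (2 ^ k) * indicator {\<omega>. \<forall>j<k. a < \<omega> (x, y + int j)} \<omega>)"

lemma detour_weight_ge:
  assumes "\<forall>j<k. a < \<omega> (x, y + int j)"
  shows "ennreal (2 ^ k) \<le> detour_weight a y x \<omega>"
  unfolding detour_weight_def using assms
  by (intro order_trans[OF _ sum_le_suminf[of _ "{k}"]]) (auto simp: summableI)

lemma detour_weight_eq_top:
  assumes "\<forall>j. a < \<omega> (x, y + int j)"
  shows "detour_weight a y x \<omega> = \<top>"
proof -
  have "detour_weight a y x \<omega> = (\<Sum>k. ennreal (2 ^ k))"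
    using assms by (simp add: detour_weight_def)
  also have "\<dots> = \<top>"
    by (rule summable_iff_suminf_neq_top) auto
  finally show ?thesis .
qed

lemma detour_weight_restrict: "detour_weight a y x (restrict \<omega> ({x} \<times> UNIV)) = detour_weight a y x \<omega>"
  by (simp add: detour_weight_def indicator_def)

lemma borel_measurable_detour_weight:
  assumes "sets G = sets borel" and "{x} \<times> UNIV \<subseteq> I"
  shows "detour_weight a y x \<in> borel_measurable (Pi\<^sub>M I (\<lambda>_. G))"
proof -
  have [measurable]: "(\<lambda>\<omega>. \<omega> (x, y + int j)) \<in> borel_measurable (Pi\<^sub>M I (\<lambda>_. G))" for j
  proof -
    have "(x, y + int j) \<in> I" using assms(2) by auto
    then show ?thesis
      using measurable_component_singleton[of "(x, y + int j)" I "\<lambda>_. G"]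
      by (simp add: measurable_cong_sets[OF refl assms(1)])
  qed
  have "detour_weight a y x = (\<lambda>\<omega>. \<Sum>k. ennreal (2 ^ k) * of_bool (\<forall>j\<in>{..<k}. a < \<omega> (x, y + int j)))"
    by (simp add: detour_weight_def indicator_def fun_eq_iff Ball_def)
  then show ?thesis by simp
qed

lemma nn_integral_detour_weight:
  assumes "prob_space G" and G: "sets G = sets borel"
  shows "(\<integral>\<^sup>+\<omega>. detour_weight a y x \<omega> \<partial>Pi\<^sub>M UNIV (\<lambda>_::site. G)) =
    (\<Sum>k. ennreal (2 ^ k) * emeasure G {a<..} ^ k)"
proof -
  interpret product_prob_space "\<lambda>_::site. G" UNIV
    using product_prob_space_const[OF assms(1)] .
  let ?M = "Pi\<^sub>M UNIV (\<lambda>_::site. G)"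
  let ?J = "\<lambda>k. (\<lambda>j. (x, y + int j)) ` {..<k}"
  define S where "S k = {\<omega> \<in> space ?M. \<forall>i\<in>?J k. \<omega> i \<in> {a<..}}" for k
  have space: "space ?M = UNIV"
    by (simp add: space_PiM sets_eq_imp_space_eq[OF G])
  have S_eq: "{\<omega>. \<forall>j<k. a < \<omega> (x, y + int j)} = S k" for k
    by (auto simp: S_def space)
  have S_sets: "S k \<in> sets ?M" for k
  proof -
    have "S k = prod_emb UNIV (\<lambda>_. G) (?J k) (Pi\<^sub>E (?J k) (\<lambda>_. {a<..}))"
      by (auto simp: S_def prod_emb_def space PiE_iff sets_eq_imp_space_eq[OF G])
    then show ?thesis by (auto intro!: sets_PiM_I simp: G)
  qed
  have emeasure_S: "emeasure ?M (S k) = emeasure G {a<..} ^ k" for k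
  proof -
    have "emeasure ?M (S k) = (\<Prod>i\<in>?J k. emeasure G {a<..})"
      unfolding S_def by (rule emeasure_PiM_Collect) (auto simp: G)
    also have "\<dots> = emeasure G {a<..} ^ k"
      by (simp add: card_image inj_on_def)
    finally show ?thesis .
  qed
  have "(\<integral>\<^sup>+\<omega>. detour_weight a y x \<omega> \<partial>?M) = (\<integral>\<^sup>+\<omega>. (\<Sum>k. ennreal (2 ^ k) * indicator (S k) \<omega>) \<partial>?M)"
    by (simp add: detour_weight_def S_eq)
  also have "\<dots> = (\<Sum>k. \<integral>\<^sup>+\<omega>. ennreal (2 ^ k) * indicator (S k) \<omega> \<partial>?M)"
    by (rule nn_integral_suminf) (use S_sets in measurable)
  also have "\<dots> = (\<Sum>k. ennreal (2 ^ k) * emeasure G {a<..} ^ k)"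
    by (simp only: nn_integral_cmult_indicator[OF S_sets] emeasure_S)
  finally show ?thesis .
qed

lemma nn_integral_detour_weight_le_2:
  assumes "prob_space G" and "sets G = sets borel" and "measure G {a<..} \<le> 1/4"
  shows "(\<integral>\<^sup>+\<omega>. detour_weight a y x \<omega> \<partial>Pi\<^sub>M UNIV (\<lambda>_::site. G)) \<le> 2"
proof -
  have tail: "emeasure G {a<..} \<le> ennreal (1/4)"
    using assms(3) by (simp add: finite_measure.emeasure_eq_measure[OF prob_space.finite_measure[OF assms(1)]])
  have "(\<Sum>k. ennreal (2 ^ k) * emeasure G {a<..} ^ k) \<le> (\<Sum>k. ennreal ((1/2) ^ k))"
  proof (intro suminf_le summableI)
    fix k :: nat
    have "ennreal (2 ^ k) * emeasure G {a<..} ^ k \<le> ennreal (2 ^ k) * ennreal (1/4) ^ k"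
      using tail by (intro mult_left_mono power_mono) auto
    also have "\<dots> = ennreal ((1/2) ^ k)"
      by (simp add: ennreal_power flip: ennreal_mult power_mult_distrib)
    finally show "ennreal (2 ^ k) * emeasure G {a<..} ^ k \<le> ennreal ((1/2) ^ k)" .
  qed
  also have "\<dots> = 2"
    by (simp add: suminf_ennreal2 suminf_geometric)
  finally show ?thesis
    using nn_integral_detour_weight[OF assms(1,2)] by simp
qed

lemma exp_fpp_T_le_detour_weights:
  fixes a :: real
  assumes "\<And>s. 0 \<le> \<omega> s"
  defines "\<theta> \<equiv> ln 2 / 2"
  shows "ennreal (exp (\<theta> * fpp_T \<omega> (x1, y1) (x2, y2))) \<le>
    ennreal (exp (\<theta> * (of_int \<bar>y1 - y2\<bar> + of_int \<bar>x1 - x2\<bar> * a))) *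
    (\<Prod>x\<in>{min x1 x2..<max x1 x2}. detour_weight a y2 x \<omega>)"
    (is "_ \<le> ennreal ?C * (\<Prod>x\<in>?X. _)")
proof -
  consider "\<forall>x\<in>?X. \<exists>k. \<omega> (x, y2 + int k) \<le> a"
    | x0 where "x0 \<in> ?X" and "\<forall>j. a < \<omega> (x0, y2 + int j)"
    by (meson not_le)
  then show ?thesis
  proof cases
    case 1
    define k where "k x = (LEAST k. \<omega> (x, y2 + int k) \<le> a)" for x
    have light: "\<omega> (x, y2 + int (k x)) \<le> a" if "x \<in> ?X" for x
      using 1 that unfolding k_def by (auto intro: LeastI_ex)
    have heavy_below: "\<forall>j<k x. a < \<omega> (x, y2 + int j)" for x
      unfolding k_def using not_less_Least by force
    have "fpp_T \<omega> (x1, y1) (x2, y2) \<le>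
        of_int \<bar>y1 - y2\<bar> + (\<Sum>x\<in>?X. 2 * real (k x) + \<omega> (x, y2 + int (k x)))"
      using assms(1) by (rule fpp_T_le_detours)
    also have "\<dots> \<le> of_int \<bar>y1 - y2\<bar> + (\<Sum>x\<in>?X. 2 * real (k x) + a)"
      using light by (intro add_left_mono sum_mono) auto
    also have "\<dots> = of_int \<bar>y1 - y2\<bar> + of_int \<bar>x1 - x2\<bar> * a + (\<Sum>x\<in>?X. 2 * real (k x))"
      by (simp add: sum.distrib max_def min_def abs_if algebra_simps)
    finally have "exp (\<theta> * fpp_T \<omega> (x1, y1) (x2, y2)) \<le>
        exp (\<theta> * (of_int \<bar>y1 - y2\<bar> + of_int \<bar>x1 - x2\<bar> * a + (\<Sum>x\<in>?X. 2 * real (k x))))"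
      by (simp add: \<theta>_def)
    also have "\<dots> = ?C * (\<Prod>x\<in>?X. 2 ^ k x)"
      using exp_of_nat_mult[of _ "ln 2 :: real"]
      by (simp add: \<theta>_def distrib_left sum_distrib_left exp_add exp_sum mult.commute)
    finally have "ennreal (exp (\<theta> * fpp_T \<omega> (x1, y1) (x2, y2))) \<le>
        ennreal (?C * (\<Prod>x\<in>?X. 2 ^ k x))"
      by (rule ennreal_leI)
    also have "\<dots> = ennreal ?C * (\<Prod>x\<in>?X. ennreal (2 ^ k x))"
      by (simp add: ennreal_mult prod_ennreal prod_nonneg)
    also have "\<dots> \<le> ennreal ?C * (\<Prod>x\<in>?X. detour_weight a y2 x \<omega>)"
      by (intro mult_left_mono prod_mono_ennreal detour_weight_ge heavy_below) auto
    finally show ?thesis .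
  next
    case 2
    have "detour_weight a y2 x \<omega> \<noteq> 0" for x
      using detour_weight_ge[of 0 a \<omega> x y2] by (auto simp: le_zero_eq)
    moreover have "detour_weight a y2 x0 \<omega> = \<top>"
      using 2(2) by (rule detour_weight_eq_top)
    ultimately have "(\<Prod>x\<in>?X. detour_weight a y2 x \<omega>) = \<top>"
      using 2 by (auto simp: ennreal_prod_eq_top)
    then show ?thesis by simp
  qed
qed

lemma AE_env_measure_nonneg:
  assumes "prob_space G" and "measure G {0..} = 1"
  shows "AE \<omega> in env_measure G. \<forall>s. 0 \<le> \<omega> s"
proof -
  interpret product_prob_space "\<lambda>_::site. G" UNIV
    using product_prob_space_const[OF assms(1)] .
  have "AE z in G. 0 \<le> z"
    using M.AE_prob_1[OF assms(2)] by simp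
  then show ?thesis
    unfolding env_measure_def using AE_all_components[of "\<lambda>z. 0 \<le> z"] by simp
qed

lemma nn_integral_prod_detour_weights_le:
  assumes "prob_space G" and "sets G = sets borel" and "measure G {a<..} \<le> 1/4" and "finite X"
  shows "(\<integral>\<^sup>+\<omega>. (\<Prod>x\<in>X. detour_weight a y x \<omega>) \<partial>Pi\<^sub>M UNIV (\<lambda>_::site. G)) \<le> 2 ^ card X"
proof -
  interpret product_prob_space "\<lambda>_::site. G" UNIV
    using product_prob_space_const[OF assms(1)] .
  have "(\<integral>\<^sup>+\<omega>. (\<Prod>x\<in>X. detour_weight a y x \<omega>) \<partial>Pi\<^sub>M UNIV (\<lambda>_. G)) =
      (\<integral>\<^sup>+\<omega>. (\<Prod>x\<in>X. detour_weight a y x (restrict \<omega> ({x} \<times> UNIV))) \<partial>Pi\<^sub>M UNIV (\<lambda>_. G))"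
    by (simp only: detour_weight_restrict)
  also have "\<dots> = (\<Prod>x\<in>X. \<integral>\<^sup>+\<omega>. detour_weight a y x (restrict \<omega> ({x} \<times> UNIV)) \<partial>Pi\<^sub>M UNIV (\<lambda>_. G))"
    using assms(2,4)
    by (intro nn_integral_prod_blocks borel_measurable_detour_weight) (auto simp: disjoint_family_on_def)
  also have "\<dots> \<le> (\<Prod>x\<in>X. 2)"
    unfolding detour_weight_restrict
    by (intro prod_mono_ennreal nn_integral_detour_weight_le_2 assms(1-3))
  finally show ?thesis by simp
qed

theorem corollary3p3:
  fixes G :: "real measure"
  assumes "prob_space G" and "sets G = sets borel" and "measure G {0..} = 1"
  shows "\<exists>\<theta>>0. \<forall>x1 x2 y1 y2 :: int.
    (\<integral>\<^sup>+ \<omega>. ennreal (exp (\<theta> * fpp_T \<omega> (x1, y1) (x2, y2))) \<partial>env_measure G) < \<infinity>"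
proof -
  interpret G: real_distribution G
    using assms(1,2) by (simp add: real_distribution_def real_distribution_axioms_def)
  obtain a where tail: "measure G {a<..} \<le> 1/4"
    using order_tendstoD(2)[OF G.tendsto_measure_greaterThan_at_top, of "1/4"]
    by (auto simp: eventually_at_top_linorder dest: less_imp_le)
  have nonneg: "AE \<omega> in env_measure G. \<forall>s. 0 \<le> \<omega> s"
    using assms(1,3) by (rule AE_env_measure_nonneg)
  show ?thesis
  proof (intro exI[of _ "ln 2 / 2"] conjI allI)
    fix x1 x2 y1 y2 :: int
    let ?X = "{min x1 x2..<max x1 x2}"
    let ?C = "ennreal (exp (ln 2 / 2 * (of_int \<bar>y1 - y2\<bar> + of_int \<bar>x1 - x2\<bar> * a)))"
    have "(\<integral>\<^sup>+\<omega>. ennreal (exp (ln 2 / 2 * fpp_T \<omega> (x1, y1) (x2, y2))) \<partial>env_measure G) \<le>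
        (\<integral>\<^sup>+\<omega>. ?C * (\<Prod>x\<in>?X. detour_weight a y2 x \<omega>) \<partial>env_measure G)"
      using nonneg
      by (intro nn_integral_mono_AE) (erule eventually_mono, rule exp_fpp_T_le_detour_weights, blast)
    also have "\<dots> = ?C * (\<integral>\<^sup>+\<omega>. (\<Prod>x\<in>?X. detour_weight a y2 x \<omega>) \<partial>env_measure G)"
      unfolding env_measure_def using assms(2)
      by (intro nn_integral_cmult borel_measurable_prod_ennreal borel_measurable_detour_weight) auto
    also have "\<dots> \<le> ?C * 2 ^ card ?X"
      unfolding env_measure_def
      by (intro mult_left_mono nn_integral_prod_detour_weights_le assms(1,2) tail) auto
    also have "\<dots> < \<infinity>"
      by (simp add: ennreal_mult_less_top power_less_top_ennreal)
    finally show "(\<integral>\<^sup>+\<omega>. ennreal (exp (ln 2 / 2 * fpp_T \<omega> (x1, y1) (x2, y2))) \<partial>env_measure G) < \<infinity>" .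
  qed simp
qed

end
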